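(* Let $N\geq1$ and let $r$ be an integer with $-(N-1)\leq r\leq N-1$ and $r\neq\pm(N-2)$. Define $$f^{\mathrm{rnk}}_N(r)=\max\Big\{\sum_{l=1}^{|\Lambda|}N_l^2\ :\ \Lambda\text{ a partition of }\{1,\dots,N\}\text{ with }\max\Lambda-|\Lambda|\leq r\Big\}.$$ Then: (i) if $N+r$ is odd, $f^{\mathrm{rnk}}_N(r)=\frac14(N+r+1)^2+\frac12(N-r-1)$; (ii) if $N+r=10$ and $N\geq 8$, $f^{\mathrm{rnk}}_N(r)=34-r$; (iii) if $N+r=16$ and $N\geq12$, $f^{\mathrm{rnk}}_N(r)=76-r$; (iv) if $N+r$ is even and neither (ii) nor (iii) applies, $f^{\mathrm{rnk}}_N(r)=\frac14(N+r)^2+\frac12(N-r)+2$.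
   Context: A partition $\Lambda=\{A_1,\dots,A_{|\Lambda|}\}$ of $\{1,\dots,N\}$ is a collection of nonempty pairwise disjoint subsets whose union is $\{1,\dots,N\}$; $|\Lambda|$ is the number of subsets, $N_l=|A_l|$, and $\max\Lambda=\max_lN_l$. The quantity $\max\Lambda-|\Lambda|$ is Dyson's rank of the partition; its possible values are the integers from $-(N-1)$ to $N-1$ except $\pm(N-2)$. *)

theory Defs
  imports Complex_Main "HOL-Library.Disjoint_Sets"
begin

definition dyson_rank :: "nat set set \<Rightarrow> int" where
  "dyson_rank P = int (Max (card ` P)) - int (card P)"

definition f_rnk :: "nat \<Rightarrow> int \<Rightarrow> nat" where
  "f_rnk N r = Max {(\<Sum>A\<in>P. (card A)^2) | P. partition_on {1..N} P \<and> dyson_rank P \<le> r}"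

end

theory Submission
  imports Defs
begin

(* Let u + 1 be the size of a largest block of a partition of {1..N} and c_i + 1 the sizes
   of the other blocks, so that c_i <= u.  With T = sum c_i, the partition has
   N + rank = 2u + 1 + T and sum of squared block sizes N + u(u+1) + sum c_i(c_i + 1).
   If q is the largest c_i, then sum c_i^2 <= q T and sum c_i^2 <= q^2 + (T - q)^2;
   for s = 2u + 1 + T this bounds 4 (sum of squares - N) by s^2 - 1 when T is even and by
   s^2 - 2s + 8 when T is odd, except for u = T = 3 and u = T = 5, which need N >= 8 resp.
   N >= 12 and give the exceptional values at s = 10 and s = 16.  The bound grows with s
   and is attained by one block of size (s+1)/2, resp. two blocks of sizes s/2 and 2
   (4 and 4, 6 and 6 in the exceptional cases), completed by singletons. *)

(* Four times f_rnk N r - N, as a function of s = N + r. *)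
definition rank_excess :: "nat \<Rightarrow> int \<Rightarrow> int" where
  "rank_excess N s =
    (if odd s then s^2 - 1
     else if s = 10 \<and> N \<ge> 8 then 96
     else if s = 16 \<and> N \<ge> 12 then 240
     else s^2 - 2*s + 8)"

lemma rank_excess_odd: "odd s \<Longrightarrow> rank_excess N s = s^2 - 1"
  by (simp add: rank_excess_def)

lemma rank_excess_even_ge: "even s \<Longrightarrow> s^2 - 2*s + 8 \<le> rank_excess N s"
  by (auto simp: rank_excess_def)

lemma rank_excess_le_succ:
  assumes "1 \<le> s"
  shows "rank_excess N s \<le> rank_excess N (s + 1)"
  using assms unfolding rank_excess_def by (auto simp: power2_eq_square algebra_simps)

lemma rank_excess_mono:
  assumes "1 \<le> s" "s \<le> t"
  shows "rank_excess N s \<le> rank_excess N t"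
  using assms(2)
proof (induction t rule: int_ge_induct)
  case (step t)
  then show ?case using assms(1) rank_excess_le_succ[of t N] by linarith
qed simp

lemma excess_le_odd:
  fixes u T q S :: int
  assumes "0 \<le> q" "q \<le> u" "q \<le> T" "S \<le> q * T" "S \<le> q^2 + (T - q)^2" "odd T"
    and "\<not> (u = 3 \<and> T = 3)" "\<not> (u = 5 \<and> T = 5)"
  shows "4 * (u * (u + 1) + T + S) \<le> (2*u + 1 + T)^2 - 2 * (2*u + 1 + T) + 8"
proof -
  have "T \<ge> 1" using assms by presburger
  then have q_u: "q * (T - 1) \<le> u * (T - 1)" using assms by (simp add: mult_right_mono)
  have "T = 1 \<or> T = 3 \<or> T = 5 \<or> T \<ge> 7" using \<open>T \<ge> 1\<close> \<open>odd T\<close> by presburger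
  then consider "T = 1" | "T = 3" | "T = 5" | "T \<ge> 7" by blast
  then show ?thesis
  proof cases
    case 1
    then show ?thesis using assms q_u by (simp add: power2_eq_square algebra_simps)
  next
    case 2
    then have "q = 0 \<or> q = 1 \<or> q = 2 \<or> q = 3" using assms by auto
    then show ?thesis using assms 2 by (auto simp: power2_eq_square algebra_simps)
  next
    case 3
    then have "q = 0 \<or> q = 1 \<or> q = 2 \<or> q = 3 \<or> q = 4 \<or> q = 5" using assms by auto
    then show ?thesis using assms 3 by (auto simp: power2_eq_square algebra_simps)
  next
    case 4
    have "0 \<le> (T - 1) * (T - 7)" using 4 by simp
    moreover have "q * T \<le> T * T" using assms by (simp add: mult_right_mono)
    ultimately show ?thesis using assms q_u by (simp add: power2_eq_square algebra_simps)
  qed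
qed

lemma excess_le_rank_excess:
  fixes u T q S :: int and N :: nat
  assumes "0 \<le> q" "q \<le> u" "q \<le> T" "S \<le> q * T" "S \<le> q^2 + (T - q)^2"
    and "0 < T \<Longrightarrow> u + 1 + T < int N"
  shows "4 * (u * (u + 1) + T + S) \<le> rank_excess N (2*u + 1 + T)"
proof (cases "even T")
  case True
  have "q * T \<le> u * T" using assms by (simp add: mult_right_mono)
  moreover have "2 * T \<le> T * T"
    using True assms by (cases "T = 0") (auto simp: mult_right_mono)
  ultimately show ?thesis
    using assms True by (simp add: rank_excess_odd power2_eq_square algebra_simps)
next
  case False
  then consider "u = 3 \<and> T = 3" | "u = 5 \<and> T = 5" | "\<not> (u = 3 \<and> T = 3)" "\<not> (u = 5 \<and> T = 5)"
    by blast
  then show ?thesis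
  proof cases
    case 1
    then show ?thesis using assms by (simp add: rank_excess_def)
  next
    case 2
    then show ?thesis using assms by (simp add: rank_excess_def)
  next
    case 3
    then show ?thesis
      using excess_le_odd[OF assms(1-5) False] rank_excess_even_ge[of "2*u + 1 + T" N] False
      by simp
  qed
qed

lemma sum_squares_le_square_sum:
  fixes c :: "'a \<Rightarrow> nat"
  assumes "finite I"
  shows "(\<Sum>i\<in>I. (c i)^2) \<le> (sum c I)^2"
proof -
  have "(\<Sum>i\<in>I. (c i)^2) \<le> (\<Sum>i\<in>I. c i * sum c I)"
    using assms by (intro sum_mono) (simp add: power2_eq_square member_le_sum)
  then show ?thesis by (simp add: power2_eq_square sum_distrib_right)
qed

lemma family_excess_le_rank_excess:
  fixes c :: "'a \<Rightarrow> nat"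
  assumes I: "finite I" and c_le_u: "\<And>i. i \<in> I \<Longrightarrow> c i \<le> u"
  shows "4 * int (u * (u + 1) + (\<Sum>i\<in>I. c i * (c i + 1)))
           \<le> rank_excess (u + 1 + sum c I + card I) (2 * int u + 1 + int (sum c I))"
proof -
  define T where "T = sum c I"
  define S where "S = (\<Sum>i\<in>I. (c i)^2)"
  obtain q where "q \<le> u" "q \<le> T" "S \<le> q * T" "S \<le> q^2 + (T - q)^2"
  proof (cases "I = {}")
    case True
    then show ?thesis using that[of 0] by (simp add: T_def S_def)
  next
    case False
    then have "Max (c ` I) \<in> c ` I" using I by (intro Max_in) auto
    then obtain i0 where i0: "i0 \<in> I" "c i0 = Max (c ` I)" by auto
    then have c_le: "c i \<le> c i0" if "i \<in> I" for i using I that by simp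
    have "S \<le> (\<Sum>i\<in>I. c i0 * c i)"
      unfolding S_def power2_eq_square using c_le by (intro sum_mono) simp
    then have "S \<le> c i0 * T" by (simp add: T_def sum_distrib_left)
    moreover have "T = c i0 + sum c (I - {i0})"
      and "S = (c i0)^2 + (\<Sum>i\<in>I - {i0}. (c i)^2)"
      using I i0 by (simp_all add: T_def S_def sum.remove)
    moreover have "(\<Sum>i\<in>I - {i0}. (c i)^2) \<le> (sum c (I - {i0}))^2"
      using I by (intro sum_squares_le_square_sum) simp
    ultimately show ?thesis
      using that[of "c i0"] c_le_u[OF \<open>i0 \<in> I\<close>] by simp
  qed
  moreover have "0 < T \<Longrightarrow> u + 1 + T < u + 1 + T + card I"
    using I by (auto simp: T_def card_gt_0_iff)
  ultimately have "4 * (int u * (int u + 1) + int T + int S)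
      \<le> rank_excess (u + 1 + T + card I) (2 * int u + 1 + int T)"
    by (intro excess_le_rank_excess[of "int q"])
      (simp_all flip: of_nat_mult of_nat_power of_nat_add of_nat_diff)
  moreover have "(\<Sum>i\<in>I. c i * (c i + 1)) = S + T"
    by (simp add: S_def T_def power2_eq_square algebra_simps sum.distrib)
  ultimately show ?thesis by (simp add: T_def algebra_simps)
qed

lemma partition_sum_squares_le:
  fixes P :: "nat set set"
  assumes P: "partition_on A P" and A: "finite A" "A \<noteq> {}"
    and rank: "int (card A) + dyson_rank P \<le> s"
  shows "4 * int (\<Sum>B\<in>P. (card B)^2) \<le> 4 * int (card A) + rank_excess (card A) s"
proof -
  have finP: "finite P" using A P finite_elements by blast
  have fin_block: "finite B" if "B \<in> P" for B
    using that A partition_onD1[OF P] by (metis Union_upper finite_subset)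
  have card_pos: "0 < card B" if "B \<in> P" for B
    using that fin_block partition_onD3[OF P] by (auto simp: card_gt_0_iff)
  have "P \<noteq> {}" using A partition_onD1[OF P] by auto
  then have "Max (card ` P) \<in> card ` P" using finP by (intro Max_in) auto
  then obtain B0 where B0: "B0 \<in> P" "card B0 = Max (card ` P)" by auto
  define I where "I = P - {B0}"
  define c where "c B = card B - 1" for B :: "nat set"
  define u where "u = card B0 - 1"
  have card_B0: "card B0 = u + 1" using card_pos[OF \<open>B0 \<in> P\<close>] by (simp add: u_def)
  have finI: "finite I" using finP by (simp add: I_def)
  have card_c: "card B = c B + 1" if "B \<in> P" for B
    using card_pos[OF that] by (simp add: c_def)
  have c_le_u: "c B \<le> u" if "B \<in> I" for B
  proof -
    have "card B \<le> card B0" using that finP B0 by (simp add: I_def)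
    then show ?thesis by (simp add: c_def card_B0)
  qed
  have "card A = (\<Sum>B\<in>P. card B)"
    using card_Union_disjoint[of P] fin_block partition_onD1[OF P] partition_onD2[OF P] by simp
  also have "\<dots> = card B0 + (\<Sum>B\<in>I. c B + 1)"
    using finP B0 card_c by (simp add: I_def sum.remove)
  finally have card_A: "card A = u + 1 + sum c I + card I"
    using card_B0 by (simp add: sum_Suc)
  have "(\<Sum>B\<in>P. (card B)^2) = (card B0)^2 + (\<Sum>B\<in>I. (c B + 1)^2)"
    using finP B0 card_c by (simp add: I_def sum.remove)
  then have sum_sq:
      "(\<Sum>B\<in>P. (card B)^2) = card A + (u * (u + 1) + (\<Sum>B\<in>I. c B * (c B + 1)))"
    using card_A card_B0 by (simp add: power2_eq_square algebra_simps sum.distrib sum_Suc)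
  have "card P = card I + 1" using card_Suc_Diff1[OF finP \<open>B0 \<in> P\<close>] by (simp add: I_def)
  then have "int (card A) + dyson_rank P = 2 * int u + 1 + int (sum c I)"
    using card_A B0(2) card_B0 by (simp add: dyson_rank_def)
  then have "rank_excess (card A) (2 * int u + 1 + int (sum c I)) \<le> rank_excess (card A) s"
    using rank by (intro rank_excess_mono) (auto simp del: of_nat_sum)
  moreover have "4 * int (u * (u + 1) + (\<Sum>B\<in>I. c B * (c B + 1)))
      \<le> rank_excess (card A) (2 * int u + 1 + int (sum c I))"
    using family_excess_le_rank_excess[of I c u] finI c_le_u unfolding card_A by blast
  ultimately show ?thesis unfolding sum_sq by simp
qed

lemma partition_on_Un:
  assumes "partition_on A P" "partition_on B Q" "disjnt A B"
  shows "partition_on (A \<union> B) (P \<union> Q)"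
  using assms disjoint_union[of P Q] by (auto simp: partition_on_def disjnt_def)

lemma partition_add_singletons:
  fixes Q :: "nat set set"
  assumes Q: "partition_on {1..n} Q" and n: "0 < n" "n \<le> N"
  defines "P \<equiv> Q \<union> (\<lambda>i. {i}) ` {n<..N}"
  shows "partition_on {1..N} P"
    and "int N + dyson_rank P = int n + dyson_rank Q"
    and "(\<Sum>B\<in>P. (card B)^2) = (\<Sum>B\<in>Q. (card B)^2) + (N - n)"
proof -
  have "disjnt {1..n} {n<..N}" by (auto simp: disjnt_def)
  moreover have "{1..n} \<union> {n<..N} = {1..N}" using n by auto
  ultimately show "partition_on {1..N} P"
    unfolding P_def using partition_on_Un[OF Q partition_on_singletons] by metis
  have finQ: "finite Q" using Q finite_elements by blast
  have block_sub: "B \<subseteq> {1..n}" if "B \<in> Q" for B using that partition_onD1[OF Q] by auto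
  have card_block: "1 \<le> card B" if "B \<in> Q" for B
  proof -
    have "finite B" using block_sub[OF that] finite_subset by blast
    moreover have "B \<noteq> {}" using partition_onD3[OF Q] that by blast
    ultimately show ?thesis by (simp add: Suc_le_eq card_gt_0_iff)
  qed
  have disj: "Q \<inter> (\<lambda>i. {i}) ` {n<..N} = {}" using block_sub by fastforce
  have inj: "inj_on (\<lambda>i::nat. {i}) {n<..N}" by (simp add: inj_on_def)
  have "Q \<noteq> {}" using Q n partition_onD1[OF Q] by auto
  then have max_Q: "Max (card ` Q) \<in> card ` Q" using finQ by (intro Max_in) auto
  have "Max (card ` P) = Max (card ` Q)"
  proof (rule Max_eqI)
    show "finite (card ` P)" using finQ by (simp add: P_def)
    show "Max (card ` Q) \<in> card ` P" using max_Q by (auto simp: P_def)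
    show "k \<le> Max (card ` Q)" if "k \<in> card ` P" for k
    proof -
      have "1 \<le> Max (card ` Q)" using max_Q card_block by auto
      then show ?thesis using that finQ by (auto simp: P_def)
    qed
  qed
  moreover have "card P = card Q + (N - n)"
    using finQ disj inj by (simp add: P_def card_Un_disjoint card_image)
  ultimately show "int N + dyson_rank P = int n + dyson_rank Q"
    using n by (simp add: dyson_rank_def)
  show "(\<Sum>B\<in>P. (card B)^2) = (\<Sum>B\<in>Q. (card B)^2) + (N - n)"
    using finQ disj inj by (simp add: P_def sum.union_disjoint sum.reindex)
qed

lemma one_block_partition:
  assumes "0 < a" "a \<le> N"
  obtains P where "partition_on {1..N} P" "int N + dyson_rank P = 2 * int a - 1"
    "int (\<Sum>B\<in>P. (card B)^2) = int N + int a * (int a - 1)"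
proof -
  have Q: "partition_on {1..a} {{1..a}}" using assms by (intro partition_on_space) auto
  note P = partition_add_singletons[OF Q assms]
  show ?thesis
  proof (rule that[OF P(1)])
    show "int N + dyson_rank ({{1..a}} \<union> (\<lambda>i. {i}) ` {a<..N}) = 2 * int a - 1"
      unfolding P(2) using assms by (simp add: dyson_rank_def)
    show "int (\<Sum>B\<in>{{1..a}} \<union> (\<lambda>i. {i}) ` {a<..N}. (card B)^2)
        = int N + int a * (int a - 1)"
      unfolding P(3) using assms by (simp add: of_nat_diff power2_eq_square algebra_simps)
  qed
qed

lemma two_block_partition:
  assumes "0 < b" "b \<le> a" "a + b \<le> N"
  obtains P where "partition_on {1..N} P" "int N + dyson_rank P = 2 * int a + int b - 2"
    "int (\<Sum>B\<in>P. (card B)^2) = int N + int a * (int a - 1) + int b * (int b - 1)"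
proof -
  define Q where "Q = {{1..a}, {a<..a + b}}"
  have Q: "partition_on {1..a + b} Q"
    unfolding Q_def using assms by (intro partition_onI) (auto simp: disjnt_def)
  have "{1..a} \<noteq> {a<..a + b}" using assms by auto
  then have rank_Q: "dyson_rank Q = int a - 2" and sum_Q: "(\<Sum>B\<in>Q. (card B)^2) = a^2 + b^2"
    using assms by (simp_all add: Q_def dyson_rank_def)
  have "0 < a + b" using assms by simp
  note P = partition_add_singletons[OF Q this \<open>a + b \<le> N\<close>]
  show ?thesis
  proof (rule that[OF P(1)])
    show "int N + dyson_rank (Q \<union> (\<lambda>i. {i}) ` {a + b<..N}) = 2 * int a + int b - 2"
      unfolding P(2) rank_Q using assms by simp
    show "int (\<Sum>B\<in>Q \<union> (\<lambda>i. {i}) ` {a + b<..N}. (card B)^2)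
        = int N + int a * (int a - 1) + int b * (int b - 1)"
      unfolding P(3) sum_Q using assms by (simp add: of_nat_diff power2_eq_square algebra_simps)
  qed
qed

lemma rank_excess_attained:
  assumes "1 \<le> s" "s \<le> 2 * int N - 1" "s \<noteq> 2" "s \<noteq> 2 * int N - 2"
  obtains P where "partition_on {1..N} P" "int N + dyson_rank P = s"
    "4 * int (\<Sum>B\<in>P. (card B)^2) = 4 * int N + rank_excess N s"
proof (cases "odd s")
  case True
  define a where "a = nat ((s + 1) div 2)"
  have "s + 1 = 2 * ((s + 1) div 2)" using True by presburger
  then have s_a: "s = 2 * int a - 1" using assms(1) unfolding a_def by simp
  obtain P where "partition_on {1..N} P" "int N + dyson_rank P = 2 * int a - 1"
      "int (\<Sum>B\<in>P. (card B)^2) = int N + int a * (int a - 1)"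
    by (rule one_block_partition[of a N]) (use assms s_a in auto)
  then show ?thesis
    using that[of P] True by (simp add: s_a rank_excess_odd power2_eq_square algebra_simps)
next
  case False
  have "\<exists>a b. 0 < b \<and> b \<le> a \<and> a + b \<le> N \<and> s = 2 * int a + int b - 2
      \<and> rank_excess N s = 4 * (int a * (int a - 1) + int b * (int b - 1))"
  proof (cases "s = 10 \<and> N \<ge> 8 \<or> s = 16 \<and> N \<ge> 12")
    case True
    then show ?thesis
    proof
      assume "s = 10 \<and> N \<ge> 8"
      then show ?thesis by (intro exI[of _ 4]) (simp add: rank_excess_def)
    next
      assume "s = 16 \<and> N \<ge> 12"
      then show ?thesis by (intro exI[of _ 6]) (simp add: rank_excess_def)
    qed
  next
    case generic: False
    define a where "a = nat (s div 2)"
    have "s = 2 * (s div 2)" using False by presburger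
    then have s_a: "s = 2 * int a" using assms(1) unfolding a_def by simp
    have "2 \<le> a" "a + 2 \<le> N" using False assms unfolding s_a by presburger+
    then show ?thesis
      using generic False
      by (intro exI[of _ a] exI[of _ 2])
        (simp add: s_a rank_excess_def power2_eq_square algebra_simps)
  qed
  then obtain a b where ab: "0 < b" "b \<le> a" "a + b \<le> N" "s = 2 * int a + int b - 2"
      "rank_excess N s = 4 * (int a * (int a - 1) + int b * (int b - 1))"
    by blast
  obtain P where "partition_on {1..N} P" "int N + dyson_rank P = 2 * int a + int b - 2"
      "int (\<Sum>B\<in>P. (card B)^2) = int N + int a * (int a - 1) + int b * (int b - 1)"
    by (rule two_block_partition[OF ab(1-3)])
  then show ?thesis using that[of P] ab(4,5) by simp
qed

lemma f_rnk_eq_rank_excess: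
  assumes "1 - int N \<le> r" "r \<le> int N - 1" "r \<noteq> int N - 2" "r \<noteq> 2 - int N"
  shows "4 * int (f_rnk N r) = 4 * int N + rank_excess N (int N + r)"
proof -
  define X where "X = {(\<Sum>B\<in>P. (card B)^2) | P. partition_on {1..N} P \<and> dyson_rank P \<le> r}"
  have "X \<subseteq> (\<lambda>P. \<Sum>B\<in>P. (card B)^2) ` {P. partition_on {1..N} P}"
    unfolding X_def by auto
  then have "finite X" using finitely_many_partition_on[of "{1..N}"] finite_surj by blast
  obtain P0 where P0: "partition_on {1..N} P0" "int N + dyson_rank P0 = int N + r"
      "4 * int (\<Sum>B\<in>P0. (card B)^2) = 4 * int N + rank_excess N (int N + r)"
    using rank_excess_attained[of "int N + r" N] assms by auto
  have "f_rnk N r = (\<Sum>B\<in>P0. (card B)^2)"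
    unfolding f_rnk_def X_def[symmetric]
  proof (rule Max_eqI[OF \<open>finite X\<close>])
    show "(\<Sum>B\<in>P0. (card B)^2) \<in> X" unfolding X_def using P0 by auto
    fix y assume "y \<in> X"
    then obtain P where "y = (\<Sum>B\<in>P. (card B)^2)" "partition_on {1..N} P" "dyson_rank P \<le> r"
      unfolding X_def by auto
    moreover have "{1..N} \<noteq> {}" using assms by auto
    ultimately have "4 * int y \<le> 4 * int N + rank_excess N (int N + r)"
      using partition_sum_squares_le[of "{1..N}" P "int N + r"] by simp
    then show "y \<le> (\<Sum>B\<in>P0. (card B)^2)" using P0(3) by linarith
  qed
  then show ?thesis using P0(3) by simp
qed

theorem lemma3:
  fixes N :: nat and r :: int
  assumes "N \<ge> 1" and "- (int N - 1) \<le> r" and "r \<le> int N - 1"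
    and "r \<noteq> int N - 2" and "r \<noteq> - (int N - 2)"
  shows "(odd (int N + r) \<longrightarrow>
           real (f_rnk N r) = (real_of_int (int N + r + 1))^2 / 4 + real_of_int (int N - r - 1) / 2)
       \<and> (int N + r = 10 \<and> N \<ge> 8 \<longrightarrow> int (f_rnk N r) = 34 - r)
       \<and> (int N + r = 16 \<and> N \<ge> 12 \<longrightarrow> int (f_rnk N r) = 76 - r)
       \<and> (even (int N + r) \<and> \<not> (int N + r = 10 \<and> N \<ge> 8) \<and> \<not> (int N + r = 16 \<and> N \<ge> 12) \<longrightarrow>
           real (f_rnk N r) = (real_of_int (int N + r))^2 / 4 + real_of_int (int N - r) / 2 + 2)"
proof -
  define s where "s = int N + r"
  have f: "4 * int (f_rnk N r) = 4 * int N + rank_excess N s"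
    unfolding s_def using assms by (intro f_rnk_eq_rank_excess) auto
  then have f_real: "4 * real (f_rnk N r) = 4 * real N + real_of_int (rank_excess N s)"
    by (metis of_int_add of_int_mult of_int_numeral of_int_of_nat_eq)
  show ?thesis
  proof (intro conjI impI)
    assume "odd (int N + r)"
    then have "real_of_int (rank_excess N s) = (real_of_int s)^2 - 1"
      by (simp add: s_def rank_excess_def)
    with f_real show "real (f_rnk N r)
        = (real_of_int (int N + r + 1))^2 / 4 + real_of_int (int N - r - 1) / 2"
      by (simp add: s_def field_simps power2_eq_square)
  next
    assume "int N + r = 10 \<and> N \<ge> 8"
    with f show "int (f_rnk N r) = 34 - r" by (simp add: s_def rank_excess_def)
  next
    assume "int N + r = 16 \<and> N \<ge> 12"
    with f show "int (f_rnk N r) = 76 - r" by (simp add: s_def rank_excess_def)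
  next
    assume "even (int N + r) \<and> \<not> (int N + r = 10 \<and> N \<ge> 8) \<and> \<not> (int N + r = 16 \<and> N \<ge> 12)"
    then have "real_of_int (rank_excess N s) = (real_of_int s)^2 - 2 * real_of_int s + 8"
      by (auto simp: s_def rank_excess_def)
    with f_real show "real (f_rnk N r)
        = (real_of_int (int N + r))^2 / 4 + real_of_int (int N - r) / 2 + 2"
      by (simp add: s_def field_simps power2_eq_square)
  qed
qed

end
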